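(* Under the assumptions of Lemma lem:Y (Hypothesis (N1), one of (S1), (S2), (S3), initial datum $x\in\mathbb R^n_+\setminus\{0\}$, no extraction), the solution of $X'(t)=\varphi(\langle\mathbf e,X(t)\rangle)X(t)+(D+B^\top)X(t)$, $X(0)=x$, satisfies $$\lim_{t\to\infty}X(t)=\bar m\,\langle\mathbf e,\zeta\rangle^{-1}\zeta,$$ where $\bar m$ is $K^{\frac1{\sigma-1}}$ under (S1), $\delta^{\frac1{\sigma-1}}$ under (S2), $e^K$ under (S3); in particular the limit lies in $\{x\in\mathbb R^n: x_1+\dots+x_n=\bar m,\ x_i\ge0\}$.
   Context: Let $n\ge 2$, $N=\{1,\dots,n\}$, $\mathbf e=(1,\dots,1)^\top$, $\langle\cdot,\cdot\rangle$ the Euclidean inner product; $\mathbb R^n_+=\{x: x_i\ge0\ \forall i\}$. Hypothesis (N1): $B=(b_{ij})$ is a real $n\times n$ matrix with $b_{ij}\ge0$, $b_{ii}=0$ ($b_{ij}X_i$ is the flow from node $i$ to node $j$), and the directed graph with an edge $i\to j$ iff $b_{ij}>0$ is strongly connected; $D$ is the diagonal matrix with $D_{ii}=-\sum_{j\ne i}b_{ij}$. $\zeta$ denotes a vector with all coordinates strictly positive spanning the kernel of $D+B^\top$. Parameters $\Gamma>0$, $K>0$, $\delta>0$. Growth specifications: (S1) $\sigma>1$, $\varphi(m)=\Gamma(1-\frac1K m^{\sigma-1})$; (S2) $0<\sigma<1$, $\varphi(m)=m^{\sigma-1}-\delta$; (S3) $\varphi(m)=\Gamma(1-\frac1K\ln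 m)$. *)

theory Defs
  imports "HOL-Analysis.Analysis"
begin

definition flow_edges :: "real^'n^'n \<Rightarrow> ('n \<times> 'n) set" where
  "flow_edges B = {(i, j). B $ i $ j > 0}"

definition hypN1 :: "real^'n^'n \<Rightarrow> bool" where
  "hypN1 B \<longleftrightarrow> (\<forall>i j. B $ i $ j \<ge> 0) \<and> (\<forall>i. B $ i $ i = 0)
     \<and> (\<forall>i j. (i, j) \<in> (flow_edges B)\<^sup>*)"

definition diagD :: "real^'n^'n \<Rightarrow> real^'n^'n" where
  "diagD B = (\<chi> i j. if i = j then - (\<Sum>k\<in>UNIV - {i}. B $ i $ k) else 0)"

end

(*
  The total mass M = X_1 + ... + X_n obeys the scalar equation M' = phi(M) M, because every column
  of D + B^T sums to zero. As phi is positive below mbar and negative above it, M stays positive and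
  (M - mbar)^2 is a Lyapunov function, so M tends to mbar.

  The profile P = X / M lies on the simplex and solves the linear equation P' = (D + B^T) P. For the
  weighted energy V(z) = sum_i z_i^2 / zeta_i one computes V(z)' = - Q(z), where
  Q(z) = sum_{i,j} b_ji zeta_j (z_i / zeta_i - z_j / zeta_j)^2 vanishes on zero-sum vectors only at
  z = 0 by strong connectivity. By compactness Q dominates V on the zero-sum hyperplane, so
  P - zeta / <e, zeta> decays exponentially and X = M P tends to mbar zeta / <e, zeta>.
*)
theory Submission
  imports Defs "HOL-Real_Asymp.Real_Asymp"
begin

section \<open>Monotonicity and barriers on [0, \<infinity>)\<close>

lemma continuous_on_Ici_of_derivative:
  fixes f f' :: "real \<Rightarrow> real"
  assumes "\<forall>t\<ge>0. (f has_real_derivative f' t) (at t within {0..})"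
  shows "continuous_on {0..} f"
  using assms by (intro continuous_on_vector_derivative)
    (auto simp: has_real_derivative_iff_has_vector_derivative)

lemma decreasing_of_derivative_nonpos_Ici:
  fixes f f' :: "real \<Rightarrow> real"
  assumes der: "\<forall>t\<ge>0. (f has_real_derivative f' t) (at t within {0..})"
    and "0 \<le> a" "a \<le> b" and nonpos: "\<And>t. a < t \<Longrightarrow> t < b \<Longrightarrow> f' t \<le> 0"
  shows "f b \<le> f a"
proof (rule DERIV_nonpos_imp_decreasing_open[OF \<open>a \<le> b\<close>])
  show "continuous_on {a..b} f"
    using continuous_on_Ici_of_derivative[OF der] by (rule continuous_on_subset) (use \<open>0 \<le> a\<close> in auto)
  fix t assume t: "a < t" "t < b"
  then have "at t within {0..} = at t"
    using \<open>0 \<le> a\<close> by (intro at_within_interior) auto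
  with der t \<open>0 \<le> a\<close> show "\<exists>y. (f has_real_derivative y) (at t) \<and> y \<le> 0"
    using nonpos[OF t] by (metis less_eq_real_def order_trans)
qed

lemma increasing_of_derivative_nonneg_Ici:
  fixes f f' :: "real \<Rightarrow> real"
  assumes der: "\<forall>t\<ge>0. (f has_real_derivative f' t) (at t within {0..})"
    and "0 \<le> a" "a \<le> b" and "\<And>t. a < t \<Longrightarrow> t < b \<Longrightarrow> 0 \<le> f' t"
  shows "f a \<le> f b"
  using decreasing_of_derivative_nonpos_Ici[of "\<lambda>t. - f t" "\<lambda>t. - f' t" a b] assms
  by (auto intro: DERIV_minus)

lemma barrier_below_Ici:
  fixes f f' :: "real \<Rightarrow> real"
  assumes der: "\<forall>t\<ge>0. (f has_real_derivative f' t) (at t within {0..})"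
    and "0 \<le> s" "s \<le> T" "c \<le> f s"
    and below: "\<And>t. s < t \<Longrightarrow> t < T \<Longrightarrow> f t < c \<Longrightarrow> 0 \<le> f' t"
  shows "c \<le> f T"
proof (rule ccontr)
  assume "\<not> c \<le> f T"
  have cont: "continuous_on {s..T} f"
    using continuous_on_Ici_of_derivative[OF der] by (rule continuous_on_subset) (use \<open>0 \<le> s\<close> in auto)
  define R0 where "R0 = {t \<in> {s..T}. c \<le> f t}"
  define r0 where "r0 = Sup R0"
  have "closed R0"
    unfolding R0_def by (rule continuous_on_closed_Collect_le[OF continuous_on_const cont]) simp
  moreover have "s \<in> R0" using \<open>s \<le> T\<close> \<open>c \<le> f s\<close> by (simp add: R0_def)
  ultimately have "r0 \<in> R0" unfolding r0_def
    by (intro closed_contains_Sup) (auto simp: R0_def bdd_above_def)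
  have below_c: "f t < c" if "r0 < t" "t \<le> T" for t
    using cSup_upper[of t R0] that \<open>r0 \<in> R0\<close> by (force simp: R0_def r0_def bdd_above_def)
  have "f r0 \<le> f T"
  proof (rule increasing_of_derivative_nonneg_Ici[OF der])
    show "0 \<le> r0" "r0 \<le> T" using \<open>r0 \<in> R0\<close> \<open>0 \<le> s\<close> by (auto simp: R0_def)
    fix t assume "r0 < t" "t < T"
    moreover have "s \<le> r0" using \<open>r0 \<in> R0\<close> by (simp add: R0_def)
    ultimately show "0 \<le> f' t" using below below_c by simp
  qed
  then show False using \<open>r0 \<in> R0\<close> \<open>\<not> c \<le> f T\<close> by (simp add: R0_def)
qed

text \<open>Stopping at the first time r1 at which f drops to d keeps f inside the band before r1.\<close>
lemma barrier_below_band_Ici: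
  fixes f f' :: "real \<Rightarrow> real"
  assumes der: "\<forall>t\<ge>0. (f has_real_derivative f' t) (at t within {0..})"
    and "0 \<le> s" "s \<le> T" "c \<le> f s" "0 < \<eta>"
    and band: "\<And>t. s < t \<Longrightarrow> c - \<eta> < f t \<Longrightarrow> f t < c \<Longrightarrow> 0 \<le> f' t"
  shows "c \<le> f T"
proof (rule ccontr)
  assume "\<not> c \<le> f T"
  define d where "d = max (f T) (c - \<eta>/2)"
  have d: "d < c" "f T \<le> d" "c - \<eta> < d"
    using \<open>\<not> c \<le> f T\<close> \<open>0 < \<eta>\<close> by (auto simp: d_def)
  have cont: "continuous_on {s..T} f"
    using continuous_on_Ici_of_derivative[OF der] by (rule continuous_on_subset) (use \<open>0 \<le> s\<close> in auto)
  define R1 where "R1 = {t \<in> {s..T}. f t \<le> d}"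
  define r1 where "r1 = Inf R1"
  have "closed R1"
    unfolding R1_def by (rule continuous_on_closed_Collect_le[OF cont continuous_on_const]) simp
  moreover have "T \<in> R1" using d \<open>s \<le> T\<close> by (simp add: R1_def)
  ultimately have "r1 \<in> R1" unfolding r1_def
    by (intro closed_contains_Inf) (auto simp: R1_def bdd_below_def)
  have above_d: "d < f t" if "s \<le> t" "t < r1" for t
    using cInf_lower[of t R1] that \<open>r1 \<in> R1\<close> by (force simp: R1_def r1_def bdd_below_def)
  have "c \<le> f r1"
  proof (rule barrier_below_Ici[OF der \<open>0 \<le> s\<close> _ \<open>c \<le> f s\<close>])
    show "s \<le> r1" using \<open>r1 \<in> R1\<close> by (simp add: R1_def)
    fix t assume "s < t" "t < r1" "f t < c"
    moreover have "c - \<eta> < f t" using above_d[of t] \<open>s < t\<close> \<open>t < r1\<close> d by linarith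
    ultimately show "0 \<le> f' t" using band by blast
  qed
  then show False using \<open>r1 \<in> R1\<close> d by (simp add: R1_def)
qed

section \<open>Scalar equations of logistic type\<close>

locale logistic_type_ode =
  fixes g M :: "real \<Rightarrow> real" and mbar :: real
  assumes mbar_pos: "0 < mbar"
    and initial_pos: "0 < M 0"
    and g_cont: "continuous_on {0<..} g"
    and g_pos: "\<And>m. 0 < m \<Longrightarrow> m < mbar \<Longrightarrow> 0 < g m"
    and g_neg: "\<And>m. mbar < m \<Longrightarrow> g m < 0"
    and M_deriv: "\<forall>t\<ge>0. (M has_real_derivative g (M t)) (at t within {0..})"
begin

lemma lower_bound: "t \<ge> 0 \<Longrightarrow> min (M 0) mbar \<le> M t"
  using mbar_pos initial_pos
  by (intro barrier_below_band_Ici[OF M_deriv order_refl, of t "min (M 0) mbar" "min (M 0) mbar / 2"])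
    (auto intro!: less_imp_le g_pos)

lemma pos: "t \<ge> 0 \<Longrightarrow> 0 < M t"
  using lower_bound[of t] mbar_pos initial_pos by linarith

definition sq_dist :: "real \<Rightarrow> real" where
  "sq_dist t = (M t - mbar)\<^sup>2"

lemma sq_dist_deriv:
  "\<forall>t\<ge>0. (sq_dist has_real_derivative 2 * ((M t - mbar) * g (M t))) (at t within {0..})"
  unfolding sq_dist_def[abs_def] using M_deriv by (auto intro!: derivative_eq_intros)

lemma drift_toward_equilibrium: "0 < m \<Longrightarrow> (m - mbar) * g m \<le> 0"
  using g_pos[of m] g_neg[of m]
  by (cases m mbar rule: linorder_cases) (auto simp: mult_nonpos_nonneg mult_nonneg_nonpos)

lemma sq_dist_decreasing: "0 \<le> s \<Longrightarrow> s \<le> t \<Longrightarrow> sq_dist t \<le> sq_dist s"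
proof (rule decreasing_of_derivative_nonpos_Ici[OF sq_dist_deriv])
  fix u assume "0 \<le> s" "s < u"
  then show "2 * ((M u - mbar) * g (M u)) \<le> 0" using drift_toward_equilibrium[OF pos[of u]] by linarith
qed

lemma upper_bound: "t \<ge> 0 \<Longrightarrow> M t \<le> mbar + \<bar>M 0 - mbar\<bar>"
  using sq_dist_decreasing[of 0 t] by (simp add: sq_dist_def abs_le_square_iff[symmetric])

text \<open>Away from the equilibrium, the Lyapunov function decreases at a uniform rate on the compact
  range of M, so it cannot stay away forever.\<close>

lemma approaches: assumes "0 < \<epsilon>" shows "\<exists>s\<ge>0. sq_dist s < \<epsilon>"
proof (rule ccontr)
  assume "\<not> ?thesis"
  then have far: "\<epsilon> \<le> sq_dist t" if "t \<ge> 0" for t using that by force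
  define C where "C = {min (M 0) mbar .. mbar + \<bar>M 0 - mbar\<bar>} \<inter> {m. \<epsilon> \<le> (m - mbar)\<^sup>2}"
  have M_in_C: "M t \<in> C" if "t \<ge> 0" for t
    using lower_bound upper_bound far that by (simp add: C_def sq_dist_def)
  have "compact C"
    unfolding C_def by (intro compact_Int_closed compact_Icc closed_Collect_le continuous_intros)
  moreover have "continuous_on C (\<lambda>m. (m - mbar) * g m)"
    using initial_pos mbar_pos
    by (intro continuous_intros continuous_on_subset[OF g_cont]) (auto simp: C_def)
  ultimately obtain m0 where "m0 \<in> C" and m0_max: "\<And>m. m \<in> C \<Longrightarrow> (m - mbar) * g m \<le> (m0 - mbar) * g m0"
    using continuous_attains_sup[of C] M_in_C[of 0] by blast
  define \<kappa> where "\<kappa> = - ((m0 - mbar) * g m0)"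
  have "0 < \<kappa>"
  proof -
    have "0 < m0" "m0 \<noteq> mbar"
      using \<open>m0 \<in> C\<close> initial_pos mbar_pos \<open>0 < \<epsilon>\<close> by (auto simp: C_def)
    then show ?thesis
      using g_pos[of m0] g_neg[of m0] unfolding \<kappa>_def
      by (cases m0 mbar rule: linorder_cases) (auto simp: mult_pos_neg mult_neg_pos mult_neg_neg)
  qed
  define T where "T = sq_dist 0 / (2 * \<kappa>) + 1"
  have "T \<ge> 0" using \<open>0 < \<kappa>\<close> by (simp add: T_def sq_dist_def)
  have "sq_dist T + 2 * \<kappa> * T \<le> sq_dist 0 + 2 * \<kappa> * 0"
  proof (rule decreasing_of_derivative_nonpos_Ici[OF _ order_refl \<open>T \<ge> 0\<close>])
    show "\<forall>t\<ge>0. ((\<lambda>t. sq_dist t + 2 * \<kappa> * t) has_real_derivative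
        2 * ((M t - mbar) * g (M t)) + 2 * \<kappa>) (at t within {0..})"
      using sq_dist_deriv by (auto intro!: derivative_eq_intros)
    show "2 * ((M t - mbar) * g (M t)) + 2 * \<kappa> \<le> 0" if "0 < t" for t
      using m0_max[OF M_in_C[of t]] that unfolding \<kappa>_def by linarith
  qed
  moreover have "2 * \<kappa> * T = sq_dist 0 + 2 * \<kappa>"
    using \<open>0 < \<kappa>\<close> by (simp add: T_def field_simps)
  ultimately have "sq_dist T < 0"
    using \<open>0 < \<kappa>\<close> by linarith
  then show False by (simp add: sq_dist_def)
qed

lemma tendsto_equilibrium: "(M \<longlongrightarrow> mbar) at_top"
proof (rule tendstoI)
  fix e :: real assume "0 < e"
  then obtain s where "s \<ge> 0" "sq_dist s < e\<^sup>2" using approaches[of "e\<^sup>2"] by auto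
  then have "sq_dist t < e\<^sup>2" if "t \<ge> s" for t
    using sq_dist_decreasing[of s t] that by simp
  then have "dist (M t) mbar < e" if "t \<ge> s" for t
    using that \<open>0 < e\<close> power2_less_imp_less[of "\<bar>M t - mbar\<bar>" e]
    by (simp add: sq_dist_def dist_real_def)
  then show "\<forall>\<^sub>F t in at_top. dist (M t) mbar < e"
    unfolding eventually_at_top_linorder by blast
qed

end

section \<open>The flow matrix and its dissipation\<close>

abbreviation flow_matrix :: "real^'n^'n \<Rightarrow> real^'n^'n" where
  "flow_matrix B \<equiv> diagD B + transpose B"

lemma flow_matrix_mult_nth:
  fixes B :: "real^'n^'n"
  assumes "\<forall>i. B $ i $ i = 0"
  shows "(flow_matrix B *v v) $ i = (\<Sum>j\<in>UNIV. B$j$i * v$j) - (\<Sum>k\<in>UNIV. B$i$k) * v$i"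
proof -
  have "(\<Sum>k\<in>UNIV - {i}. B $ i $ k) = (\<Sum>k\<in>UNIV. B$i$k)"
    using assms by (intro sum.mono_neutral_left) auto
  moreover have "(flow_matrix B *v v) $ i
      = (\<Sum>j\<in>UNIV. B$j$i * v$j - (if j = i then (\<Sum>k\<in>UNIV - {i}. B $ i $ k) * v$j else 0))"
    unfolding matrix_vector_mult_def diagD_def transpose_def
    by (simp, intro sum.cong refl) (auto simp: assms algebra_simps)
  ultimately show ?thesis
    by (simp add: sum_subtractf)
qed

lemma sum_flow_matrix_mult:
  fixes B :: "real^'n^'n"
  assumes "\<forall>i. B $ i $ i = 0"
  shows "(\<Sum>i\<in>UNIV. (flow_matrix B *v v) $ i) = 0"
proof -
  have "(\<Sum>i\<in>UNIV. \<Sum>j\<in>UNIV. B$j$i * v$j) = (\<Sum>j\<in>UNIV. (\<Sum>i\<in>UNIV. B$j$i) * v$j)"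
    by (subst sum.swap) (simp add: sum_distrib_right)
  then show ?thesis by (simp add: flow_matrix_mult_nth[OF assms] sum_subtractf)
qed

definition weighted_energy :: "real^'n \<Rightarrow> real^'n \<Rightarrow> real" where
  "weighted_energy \<zeta> z = (\<Sum>i\<in>UNIV. (z$i)\<^sup>2 / \<zeta>$i)"

definition dissipation :: "real^'n^'n \<Rightarrow> real^'n \<Rightarrow> real^'n \<Rightarrow> real" where
  "dissipation B \<zeta> z = (\<Sum>i\<in>UNIV. \<Sum>j\<in>UNIV. B$j$i * \<zeta>$j * (z$i / \<zeta>$i - z$j / \<zeta>$j)\<^sup>2)"

lemma energy_dissipation_identity:
  fixes B :: "real^'n^'n"
  assumes diag: "\<forall>i. B $ i $ i = 0" and \<zeta>_pos: "\<forall>i. 0 < \<zeta> $ i"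
    and ker: "flow_matrix B *v \<zeta> = 0"
  shows "2 * (\<Sum>i\<in>UNIV. z$i * (flow_matrix B *v z)$i / \<zeta>$i) = - dissipation B \<zeta> z"
proof -
  define u where "u i = z$i / \<zeta>$i" for i
  define out where "out i = (\<Sum>k\<in>UNIV. B$i$k)" for i
  define cross where "cross = (\<Sum>i\<in>UNIV. \<Sum>j\<in>UNIV. B$j$i * \<zeta>$j * u i * u j)"
  have z_eq: "z$i = \<zeta>$i * u i" for i using \<zeta>_pos[rule_format, of i] by (simp add: u_def)
  \<comment> \<open>the kernel condition says that inflow and outflow balance at every node\<close>
  have balance: "(\<Sum>j\<in>UNIV. B$j$i * \<zeta>$j) = out i * \<zeta>$i" for i
    using arg_cong[OF ker, of "\<lambda>w. w $ i"] by (simp add: flow_matrix_mult_nth[OF diag] out_def)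
  have "(\<Sum>i\<in>UNIV. z$i * (flow_matrix B *v z)$i / \<zeta>$i)
      = (\<Sum>i\<in>UNIV. u i * ((\<Sum>j\<in>UNIV. B$j$i * \<zeta>$j * u j) - out i * \<zeta>$i * u i))"
  proof (intro sum.cong refl)
    fix i
    have "0 < \<zeta>$i" using \<zeta>_pos by simp
    then show "z$i * (flow_matrix B *v z)$i / \<zeta>$i
        = u i * ((\<Sum>j\<in>UNIV. B$j$i * \<zeta>$j * u j) - out i * \<zeta>$i * u i)"
      by (simp add: flow_matrix_mult_nth[OF diag] z_eq out_def field_simps mult.assoc)
  qed
  also have "\<dots> = cross - (\<Sum>i\<in>UNIV. out i * \<zeta>$i * (u i)\<^sup>2)"
    by (simp add: cross_def sum_subtractf sum_distrib_left algebra_simps power2_eq_square)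
  finally have lhs: "(\<Sum>i\<in>UNIV. z$i * (flow_matrix B *v z)$i / \<zeta>$i)
      = cross - (\<Sum>i\<in>UNIV. out i * \<zeta>$i * (u i)\<^sup>2)" .
  have "dissipation B \<zeta> z = (\<Sum>i\<in>UNIV. \<Sum>j\<in>UNIV. B$j$i * \<zeta>$j * (u i)\<^sup>2 + B$j$i * \<zeta>$j * (u j)\<^sup>2
         - 2 * (B$j$i * \<zeta>$j * u i * u j))"
    unfolding dissipation_def u_def[symmetric]
    by (intro sum.cong refl) (simp add: power2_diff algebra_simps)
  also have "\<dots> = (\<Sum>i\<in>UNIV. (\<Sum>j\<in>UNIV. B$j$i * \<zeta>$j) * (u i)\<^sup>2)
       + (\<Sum>i\<in>UNIV. \<Sum>j\<in>UNIV. B$j$i * \<zeta>$j * (u j)\<^sup>2) - 2 * cross"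
    by (simp add: cross_def sum.distrib sum_subtractf sum_distrib_left sum_distrib_right)
  also have "(\<Sum>i\<in>UNIV. \<Sum>j\<in>UNIV. B$j$i * \<zeta>$j * (u j)\<^sup>2) = (\<Sum>j\<in>UNIV. out j * \<zeta>$j * (u j)\<^sup>2)"
    by (subst sum.swap) (simp add: out_def sum_distrib_right)
  finally have "dissipation B \<zeta> z = 2 * (\<Sum>i\<in>UNIV. out i * \<zeta>$i * (u i)\<^sup>2) - 2 * cross"
    by (simp add: balance)
  with lhs show ?thesis by simp
qed

lemma dissipation_nonneg:
  assumes "hypN1 B" "\<forall>i. 0 < \<zeta> $ i"
  shows "0 \<le> dissipation B \<zeta> z"
  using assms unfolding dissipation_def hypN1_def
  by (intro sum_nonneg mult_nonneg_nonneg zero_le_power2) (auto intro: less_imp_le)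

text \<open>Strong connectivity enters here: zero dissipation forces z / \<zeta> to be constant along every
  edge, hence on the whole graph.\<close>
lemma dissipation_eq_0_imp_parallel:
  fixes B :: "real^'n^'n"
  assumes N1: "hypN1 B" and \<zeta>_pos: "\<forall>i. 0 < \<zeta> $ i" and "dissipation B \<zeta> z = 0"
  shows "\<exists>r. z = r *\<^sub>R \<zeta>"
proof -
  define u where "u i = z$i / \<zeta>$i" for i
  have B_nonneg: "\<forall>i j. 0 \<le> B$i$j" using N1 by (simp add: hypN1_def)
  have \<zeta>_nonneg: "\<forall>i. 0 \<le> \<zeta>$i" using \<zeta>_pos by (auto intro: less_imp_le)
  have terms_0: "\<forall>i\<in>UNIV. \<forall>j\<in>UNIV. B$j$i * \<zeta>$j * (u i - u j)\<^sup>2 = 0"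
    using \<open>dissipation B \<zeta> z = 0\<close> unfolding dissipation_def u_def[symmetric]
    by (simp add: sum_nonneg_eq_0_iff sum_nonneg B_nonneg \<zeta>_nonneg)
  have edge: "u a = u b" if "(a, b) \<in> flow_edges B" for a b
    using terms_0[rule_format, of b a] that \<zeta>_pos[rule_format, of a] by (simp add: flow_edges_def)
  have path: "u a = u b" if "(a, b) \<in> (flow_edges B)\<^sup>*" for a b
    using that by (induction rule: rtrancl_induct) (auto dest: edge)
  fix k :: 'n
  have "z$i = u k * \<zeta>$i" for i
    using path[of i k] N1 \<zeta>_pos[rule_format, of i] by (simp add: hypN1_def u_def field_simps)
  then show ?thesis by (auto simp: vec_eq_iff)
qed

lemma dissipation_pos:
  fixes B :: "real^'n^'n"
  assumes N1: "hypN1 B" and \<zeta>_pos: "\<forall>i. 0 < \<zeta> $ i"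
    and "z \<noteq> 0" and sum_0: "(\<Sum>i\<in>UNIV. z$i) = 0"
  shows "0 < dissipation B \<zeta> z"
proof (rule ccontr)
  assume "\<not> ?thesis"
  then obtain r where "z = r *\<^sub>R \<zeta>"
    using dissipation_nonneg[OF N1 \<zeta>_pos, of z] dissipation_eq_0_imp_parallel[OF N1 \<zeta>_pos] by force
  moreover have "0 < (\<Sum>i\<in>UNIV. \<zeta>$i)" using \<zeta>_pos by (intro sum_pos) auto
  ultimately show False
    using sum_0 \<open>z \<noteq> 0\<close> by (simp add: sum_distrib_left[symmetric])
qed

lemma dissipation_scaleR: "dissipation B \<zeta> (r *\<^sub>R z) = r\<^sup>2 * dissipation B \<zeta> z"
  unfolding dissipation_def sum_distrib_left
proof (intro sum.cong refl)
  fix i j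
  have "r * z$i / \<zeta>$i - r * z$j / \<zeta>$j = r * (z$i / \<zeta>$i - z$j / \<zeta>$j)"
    by (simp add: right_diff_distrib)
  then show "B$j$i * \<zeta>$j * ((r *\<^sub>R z)$i / \<zeta>$i - (r *\<^sub>R z)$j / \<zeta>$j)\<^sup>2
      = r\<^sup>2 * (B$j$i * \<zeta>$j * (z$i / \<zeta>$i - z$j / \<zeta>$j)\<^sup>2)"
    by (simp add: power_mult_distrib)
qed

lemma continuous_on_dissipation: "\<forall>i. 0 < \<zeta> $ i \<Longrightarrow> continuous_on S (dissipation B \<zeta>)"
  unfolding dissipation_def by (intro continuous_intros) (auto simp: less_imp_neq[symmetric])

lemma weighted_energy_le:
  assumes "\<forall>i. 0 < \<zeta> $ i"
  shows "weighted_energy \<zeta> z \<le> (\<Sum>i\<in>UNIV. 1 / \<zeta>$i) * (norm z)\<^sup>2"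
  unfolding weighted_energy_def sum_distrib_right
proof (intro sum_mono)
  fix i
  have "(z$i)\<^sup>2 \<le> (norm z)\<^sup>2"
    using component_le_norm_cart[of z i] by (metis abs_le_square_iff abs_norm_cancel)
  then show "(z$i)\<^sup>2 / \<zeta>$i \<le> 1 / \<zeta>$i * (norm z)\<^sup>2"
    using assms[rule_format, of i] by (simp add: divide_right_mono)
qed

text \<open>By homogeneity it suffices to bound the dissipation on the compact set of unit vectors
  with zero sum, where it is positive.\<close>
lemma dissipation_coercive:
  fixes B :: "real^'n^'n"
  assumes N1: "hypN1 B" and \<zeta>_pos: "\<forall>i. 0 < \<zeta> $ i"
  obtains c where "0 < c" "\<And>z. (\<Sum>i\<in>UNIV. z$i) = 0 \<Longrightarrow> c * (norm z)\<^sup>2 \<le> dissipation B \<zeta> z"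
proof -
  define S where "S = sphere (0::real^'n) 1 \<inter> {z. (\<Sum>i\<in>UNIV. z$i) = 0}"
  have normalize: "(1 / norm z) *\<^sub>R z \<in> S" if "z \<noteq> 0" "(\<Sum>i\<in>UNIV. z$i) = 0" for z
    using that by (simp add: S_def sum_divide_distrib[symmetric])
  show ?thesis
  proof (cases "S = {}")
    case True
    then have zero: "z = 0" if "(\<Sum>i\<in>UNIV. z$i) = 0" for z :: "real^'n"
      using normalize[of z] that by auto
    show ?thesis
    proof (rule that[of 1])
      fix z :: "real^'n" assume "(\<Sum>i\<in>UNIV. z$i) = 0"
      then have "z = 0" by (rule zero)
      then show "1 * (norm z)\<^sup>2 \<le> dissipation B \<zeta> z" by (simp add: dissipation_def)
    qed simp
  next
    case False
    have "compact S"
      unfolding S_def by (intro compact_Int_closed compact_sphere closed_Collect_eq continuous_intros)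
    then obtain z0 where "z0 \<in> S" and z0_min: "\<And>y. y \<in> S \<Longrightarrow> dissipation B \<zeta> z0 \<le> dissipation B \<zeta> y"
      using continuous_attains_inf[OF _ False continuous_on_dissipation[OF \<zeta>_pos]] by blast
    have "0 < dissipation B \<zeta> z0"
      using \<open>z0 \<in> S\<close> by (intro dissipation_pos[OF N1 \<zeta>_pos]) (auto simp: S_def)
    moreover have "dissipation B \<zeta> z0 * (norm z)\<^sup>2 \<le> dissipation B \<zeta> z"
      if "(\<Sum>i\<in>UNIV. z$i) = 0" for z
    proof (cases "z = 0")
      case False
      have "z = norm z *\<^sub>R ((1 / norm z) *\<^sub>R z)" using False by simp
      then have "dissipation B \<zeta> z = (norm z)\<^sup>2 * dissipation B \<zeta> ((1 / norm z) *\<^sub>R z)"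
        by (metis dissipation_scaleR)
      then show ?thesis
        using z0_min[OF normalize[OF False that]] by (simp add: mult.commute[of _ "(norm z)\<^sup>2"] mult_left_mono)
    qed (simp add: dissipation_def)
    ultimately show ?thesis by (rule that)
  qed
qed

lemma has_real_derivative_vec_nth:
  "(X has_vector_derivative X') F \<Longrightarrow> ((\<lambda>t. X t $ i) has_real_derivative X' $ i) F"
  using bounded_linear.has_vector_derivative[OF bounded_linear_vec_nth]
  by (simp add: has_real_derivative_iff_has_vector_derivative)

lemma weighted_energy_has_derivative:
  fixes B :: "real^'n^'n"
  assumes diag: "\<forall>i. B $ i $ i = 0" and \<zeta>_pos: "\<forall>i. 0 < \<zeta> $ i"
    and ker: "flow_matrix B *v \<zeta> = 0"
    and der: "(Z has_vector_derivative flow_matrix B *v Z t) (at t within S)"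
  shows "((\<lambda>t. weighted_energy \<zeta> (Z t)) has_real_derivative - dissipation B \<zeta> (Z t))
    (at t within S)"
proof -
  have "((\<lambda>t. weighted_energy \<zeta> (Z t)) has_real_derivative
      (\<Sum>i\<in>UNIV. 2 * (Z t $ i * (flow_matrix B *v Z t) $ i / \<zeta>$i))) (at t within S)"
    unfolding weighted_energy_def
  proof (intro DERIV_sum)
    fix i
    show "((\<lambda>t. (Z t $ i)\<^sup>2 / \<zeta>$i) has_real_derivative
        2 * (Z t $ i * (flow_matrix B *v Z t) $ i / \<zeta>$i)) (at t within S)"
      using has_real_derivative_vec_nth[OF der, of i] \<zeta>_pos[rule_format, of i]
      by (auto intro!: derivative_eq_intros)
  qed
  moreover have "(\<Sum>i\<in>UNIV. 2 * (Z t $ i * (flow_matrix B *v Z t) $ i / \<zeta>$i)) = - dissipation B \<zeta> (Z t)"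
    using energy_dissipation_identity[OF diag \<zeta>_pos ker, of "Z t"] by (simp add: sum_distrib_left)
  ultimately show ?thesis by simp
qed

lemma component_sq_le_weighted_energy:
  assumes "\<forall>i. 0 < \<zeta> $ i"
  shows "(z $ i)\<^sup>2 \<le> \<zeta>$i * weighted_energy \<zeta> z"
proof -
  have "(z $ i)\<^sup>2 / \<zeta>$i \<le> weighted_energy \<zeta> z"
    unfolding weighted_energy_def
    by (rule member_le_sum[where f = "\<lambda>i. (z $ i)\<^sup>2 / \<zeta>$i"]) (use assms in \<open>auto intro: divide_nonneg_pos\<close>)
  then show ?thesis using assms[rule_format, of i] by (simp add: field_simps)
qed

text \<open>Coercivity turns the energy identity into W' \<le> - a W for W = weighted_energy \<zeta> \<circ> Z,
  so exp (a t) W t is nonincreasing.\<close>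
lemma sum_zero_solution_energy_decay:
  fixes B :: "real^'n^'n" and Z :: "real \<Rightarrow> real^'n"
  assumes N1: "hypN1 B" and \<zeta>_pos: "\<forall>i. 0 < \<zeta> $ i"
    and ker: "flow_matrix B *v \<zeta> = 0"
    and der: "\<forall>t\<ge>0. (Z has_vector_derivative flow_matrix B *v Z t) (at t within {0..})"
    and sum_0: "\<forall>t\<ge>0. (\<Sum>i\<in>UNIV. Z t $ i) = 0"
  obtains a where "0 < a"
    "\<And>t. 0 \<le> t \<Longrightarrow> weighted_energy \<zeta> (Z t) \<le> weighted_energy \<zeta> (Z 0) * exp (- (a * t))"
proof -
  have diag: "\<forall>i. B $ i $ i = 0" using N1 by (simp add: hypN1_def)
  obtain c where "0 < c" and coercive: "\<And>z. (\<Sum>i\<in>UNIV. z$i) = 0 \<Longrightarrow> c * (norm z)\<^sup>2 \<le> dissipation B \<zeta> z"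
    using dissipation_coercive[OF N1 \<zeta>_pos] by blast
  define C where "C = (\<Sum>i\<in>UNIV. 1 / \<zeta>$i)"
  have "0 < C" unfolding C_def using \<zeta>_pos by (intro sum_pos) auto
  define a where "a = c / C"
  have "0 < a" using \<open>0 < c\<close> \<open>0 < C\<close> by (simp add: a_def)
  define W where "W t = weighted_energy \<zeta> (Z t)" for t
  have decay: "a * W t \<le> dissipation B \<zeta> (Z t)" if "t \<ge> 0" for t
  proof -
    have "a * W t \<le> a * (C * (norm (Z t))\<^sup>2)"
      using weighted_energy_le[OF \<zeta>_pos, of "Z t"] \<open>0 < a\<close> by (simp add: W_def C_def)
    also have "\<dots> \<le> dissipation B \<zeta> (Z t)"
      using coercive[of "Z t"] sum_0 that \<open>0 < C\<close> by (simp add: a_def)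
    finally show ?thesis .
  qed
  have "W t \<le> W 0 * exp (- (a * t))" if "t \<ge> 0" for t
  proof -
    have "exp (a * t) * W t \<le> exp (a * 0) * W 0"
    proof (rule decreasing_of_derivative_nonpos_Ici[OF _ order_refl that])
      show "\<forall>t\<ge>0. ((\<lambda>t. exp (a * t) * W t) has_real_derivative
          exp (a * t) * (a * W t - dissipation B \<zeta> (Z t))) (at t within {0..})"
        using weighted_energy_has_derivative[OF diag \<zeta>_pos ker] der unfolding W_def
        by (auto intro!: derivative_eq_intros simp: algebra_simps)
      show "exp (a * s) * (a * W s - dissipation B \<zeta> (Z s)) \<le> 0" if "0 < s" for s
        using decay[of s] that by (simp add: mult_nonneg_nonpos)
    qed
    then show ?thesis by (simp add: exp_minus field_simps)
  qed
  with \<open>0 < a\<close> show ?thesis unfolding W_def by (rule that)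
qed

lemma sum_zero_solution_tendsto_0:
  fixes B :: "real^'n^'n" and Z :: "real \<Rightarrow> real^'n"
  assumes N1: "hypN1 B" and \<zeta>_pos: "\<forall>i. 0 < \<zeta> $ i"
    and ker: "flow_matrix B *v \<zeta> = 0"
    and der: "\<forall>t\<ge>0. (Z has_vector_derivative flow_matrix B *v Z t) (at t within {0..})"
    and sum_0: "\<forall>t\<ge>0. (\<Sum>i\<in>UNIV. Z t $ i) = 0"
  shows "(Z \<longlongrightarrow> 0) at_top"
proof (rule vec_tendstoI)
  fix i
  obtain a where "0 < a" and
    W_le: "\<And>t. 0 \<le> t \<Longrightarrow> weighted_energy \<zeta> (Z t) \<le> weighted_energy \<zeta> (Z 0) * exp (- (a * t))"
    using sum_zero_solution_energy_decay[OF assms] by blast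
  define bound where "bound t = \<zeta>$i * (weighted_energy \<zeta> (Z 0) * exp (- (a * t)))" for t
  have bound_0: "(bound \<longlongrightarrow> 0) at_top"
    unfolding bound_def using \<open>0 < a\<close> by real_asymp
  have le_bound: "(Z t $ i)\<^sup>2 \<le> bound t" if "t \<ge> 0" for t
  proof -
    have "(Z t $ i)\<^sup>2 \<le> \<zeta>$i * weighted_energy \<zeta> (Z t)"
      by (rule component_sq_le_weighted_energy[OF \<zeta>_pos])
    also have "\<dots> \<le> bound t"
      unfolding bound_def using W_le[OF that] \<zeta>_pos[rule_format, of i] by (intro mult_left_mono) auto
    finally show ?thesis .
  qed
  have "((\<lambda>t. (Z t $ i)\<^sup>2) \<longlongrightarrow> 0) at_top"
  proof (rule tendsto_sandwich[OF _ _ tendsto_const bound_0])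
    show "\<forall>\<^sub>F t in at_top. (Z t $ i)\<^sup>2 \<le> bound t"
      using eventually_ge_at_top[of "0::real"] by (rule eventually_mono) (rule le_bound)
  qed simp
  then have "((\<lambda>t. sqrt ((Z t $ i)\<^sup>2)) \<longlongrightarrow> sqrt 0) at_top" by (rule tendsto_real_sqrt)
  then show "((\<lambda>t. Z t $ i) \<longlongrightarrow> 0 $ i) at_top" by (simp add: tendsto_rabs_zero_iff)
qed

lemma simplex_solution_tendsto:
  fixes B :: "real^'n^'n" and P :: "real \<Rightarrow> real^'n"
  assumes N1: "hypN1 B" and \<zeta>_pos: "\<forall>i. 0 < \<zeta> $ i"
    and ker: "flow_matrix B *v \<zeta> = 0"
    and der: "\<forall>t\<ge>0. (P has_vector_derivative flow_matrix B *v P t) (at t within {0..})"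
    and sum_1: "\<forall>t\<ge>0. (\<Sum>i\<in>UNIV. P t $ i) = 1"
  shows "(P \<longlongrightarrow> (1 / (\<Sum>i\<in>UNIV. \<zeta> $ i)) *\<^sub>R \<zeta>) at_top"
proof -
  define p where "p = (1 / (\<Sum>i\<in>UNIV. \<zeta> $ i)) *\<^sub>R \<zeta>"
  have "0 < (\<Sum>i\<in>UNIV. \<zeta> $ i)" using \<zeta>_pos by (intro sum_pos) auto
  then have "(\<Sum>i\<in>UNIV. p $ i) = 1" by (simp add: p_def sum_divide_distrib[symmetric])
  moreover have "flow_matrix B *v p = 0" by (simp add: p_def matrix_vector_mult_scaleR ker)
  ultimately have "((\<lambda>t. P t - p) \<longlongrightarrow> 0) at_top"
    using der sum_1
    by (intro sum_zero_solution_tendsto_0[OF N1 \<zeta>_pos ker])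
      (auto intro!: derivative_eq_intros simp: matrix_vector_mult_diff_distrib sum_subtractf)
  then show ?thesis by (simp add: p_def LIM_zero_iff)
qed

section \<open>Logistic growth on a network\<close>

definition logistic_rate :: "(real \<Rightarrow> real) \<Rightarrow> real \<Rightarrow> bool" where
  "logistic_rate \<phi> mbar \<longleftrightarrow> 0 < mbar \<and> continuous_on {0<..} \<phi>
     \<and> (\<forall>m. 0 < m \<longrightarrow> m < mbar \<longrightarrow> 0 < \<phi> m) \<and> (\<forall>m. mbar < m \<longrightarrow> \<phi> m < 0)"

lemma logistic_rate_richards:
  assumes "1 < \<sigma>" "0 < \<Gamma>" "0 < K"
  shows "logistic_rate (\<lambda>m. \<Gamma> * (1 - (1 / K) * m powr (\<sigma> - 1))) (K powr (1 / (\<sigma> - 1)))"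
    (is "logistic_rate ?\<phi> ?mbar")
proof -
  have mbar: "0 < ?mbar" "?mbar powr (\<sigma> - 1) = K" using assms by (simp_all add: powr_powr)
  have "0 < ?\<phi> m" if "0 < m" "m < ?mbar" for m
    using powr_less_mono2[of "\<sigma> - 1" m ?mbar] that assms mbar by (simp add: field_simps)
  moreover have "?\<phi> m < 0" if "?mbar < m" for m
    using powr_less_mono2[of "\<sigma> - 1" ?mbar m] that assms mbar by (simp add: field_simps mult_pos_neg)
  moreover have "continuous_on {0<..} ?\<phi>" by (intro continuous_intros) auto
  ultimately show ?thesis using mbar by (simp add: logistic_rate_def)
qed

lemma logistic_rate_bertalanffy:
  assumes "0 < \<sigma>" "\<sigma> < 1" "0 < \<delta>"
  shows "logistic_rate (\<lambda>m. m powr (\<sigma> - 1) - \<delta>) (\<delta> powr (1 / (\<sigma> - 1)))"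
    (is "logistic_rate ?\<phi> ?mbar")
proof -
  have mbar: "0 < ?mbar" "?mbar powr (\<sigma> - 1) = \<delta>" using assms by (simp_all add: powr_powr)
  have "0 < ?\<phi> m" if "0 < m" "m < ?mbar" for m
    using powr_less_mono2_neg[of "\<sigma> - 1" m ?mbar] that assms mbar by simp
  moreover have "?\<phi> m < 0" if "?mbar < m" for m
    using powr_less_mono2_neg[of "\<sigma> - 1" ?mbar m] that assms mbar by simp
  moreover have "continuous_on {0<..} ?\<phi>" by (intro continuous_intros) auto
  ultimately show ?thesis using mbar by (simp add: logistic_rate_def)
qed

lemma logistic_rate_gompertz:
  assumes "0 < \<Gamma>" "0 < K"
  shows "logistic_rate (\<lambda>m. \<Gamma> * (1 - (1 / K) * ln m)) (exp K)"
    (is "logistic_rate ?\<phi> _")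
proof -
  have "0 < ?\<phi> m" if "0 < m" "m < exp K" for m
    using ln_less_cancel_iff[of m "exp K"] that assms by (simp add: field_simps)
  moreover have "?\<phi> m < 0" if "exp K < m" for m
    using ln_less_cancel_iff[of "exp K" m] that assms exp_gt_zero[of K]
    by (simp add: field_simps mult_pos_neg)
  moreover have "continuous_on {0<..} ?\<phi>" by (intro continuous_intros) auto
  ultimately show ?thesis by (simp add: logistic_rate_def)
qed

lemma sum_vec_pos:
  fixes x :: "real^'n"
  assumes "\<forall>i. 0 \<le> x $ i" "x \<noteq> 0"
  shows "0 < (\<Sum>i\<in>UNIV. x $ i)"
proof -
  obtain k where "x $ k \<noteq> 0" using \<open>x \<noteq> 0\<close> by (auto simp: vec_eq_iff)
  then show ?thesis using assms(1) by (intro sum_pos2[of UNIV k]) (auto simp: order_le_less)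
qed

lemma total_mass_has_derivative:
  fixes B :: "real^'n^'n"
  assumes diag: "\<forall>i. B $ i $ i = 0"
    and der: "(X has_vector_derivative r *\<^sub>R X t + flow_matrix B *v X t) F"
  shows "((\<lambda>s. \<Sum>i\<in>UNIV. X s $ i) has_real_derivative r * (\<Sum>i\<in>UNIV. X t $ i)) F"
proof -
  have "((\<lambda>s. \<Sum>i\<in>UNIV. X s $ i) has_real_derivative
      (\<Sum>i\<in>UNIV. (r *\<^sub>R X t + flow_matrix B *v X t) $ i)) F"
    by (intro DERIV_sum has_real_derivative_vec_nth[OF der])
  then show ?thesis
    by (simp add: sum.distrib sum_flow_matrix_mult[OF diag] sum_distrib_left)
qed

lemma normalized_has_vector_derivative:
  fixes A :: "real^'n^'n"
  assumes der: "(X has_vector_derivative r *\<^sub>R X t + A *v X t) (at t within S)"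
    and mass: "(M has_real_derivative r * M t) (at t within S)" and "M t \<noteq> 0"
  shows "((\<lambda>s. (1 / M s) *\<^sub>R X s) has_vector_derivative A *v ((1 / M t) *\<^sub>R X t))
    (at t within S)"
proof -
  have "((\<lambda>s. (1 / M s) *\<^sub>R X s) has_vector_derivative
      (1 / M t) *\<^sub>R (r *\<^sub>R X t + A *v X t) + (- (r * M t) / (M t)\<^sup>2) *\<^sub>R X t)
      (at t within S)"
  proof (rule has_vector_derivative_scaleR[OF _ der])
    show "((\<lambda>s. 1 / M s) has_real_derivative - (r * M t) / (M t)\<^sup>2) (at t within S)"
      using mass \<open>M t \<noteq> 0\<close> by (auto intro!: derivative_eq_intros simp: power2_eq_square)
  qed
  moreover have "(1 / M t) *\<^sub>R (r *\<^sub>R X t + A *v X t) + (- (r * M t) / (M t)\<^sup>2) *\<^sub>R X t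
      = A *v ((1 / M t) *\<^sub>R X t)"
    using \<open>M t \<noteq> 0\<close> by (simp add: matrix_vector_mult_scaleR scaleR_add_right power2_eq_square)
  ultimately show ?thesis by simp
qed

theorem network_growth_tendsto:
  fixes B :: "real^'n^'n" and \<zeta> x :: "real^'n" and X :: "real \<Rightarrow> real^'n"
  assumes N1: "hypN1 B" and \<zeta>_pos: "\<forall>i. 0 < \<zeta> $ i" and ker: "flow_matrix B *v \<zeta> = 0"
    and rate: "logistic_rate \<phi> mbar"
    and x_nonneg: "\<forall>i. 0 \<le> x $ i" and x_ne: "x \<noteq> 0" and init: "X 0 = x"
    and ode: "\<forall>t\<ge>0. (X has_vector_derivative
                 (\<phi> (\<Sum>i\<in>UNIV. X t $ i) *\<^sub>R X t + flow_matrix B *v X t)) (at t within {0..})"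
  shows "(X \<longlongrightarrow> (mbar / (\<Sum>i\<in>UNIV. \<zeta> $ i)) *\<^sub>R \<zeta>) at_top"
proof -
  have diag: "\<forall>i. B $ i $ i = 0" using N1 by (simp add: hypN1_def)
  define M where "M t = (\<Sum>i\<in>UNIV. X t $ i)" for t
  have M_deriv: "\<forall>t\<ge>0. (M has_real_derivative \<phi> (M t) * M t) (at t within {0..})"
    using total_mass_has_derivative[OF diag] ode unfolding M_def[abs_def] by blast
  interpret logistic_type_ode "\<lambda>m. \<phi> m * m" M mbar
    using rate M_deriv sum_vec_pos[OF x_nonneg x_ne] init
    by unfold_locales (auto simp: logistic_rate_def M_def mult_neg_pos intro!: continuous_intros)
  have M_ne_0: "M t \<noteq> 0" if "0 \<le> t" for t using pos[OF that] by simp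
  define P where "P t = (1 / M t) *\<^sub>R X t" for t
  have "(P \<longlongrightarrow> (1 / (\<Sum>i\<in>UNIV. \<zeta> $ i)) *\<^sub>R \<zeta>) at_top"
  proof (rule simplex_solution_tendsto[OF N1 \<zeta>_pos ker])
    show "\<forall>t\<ge>0. (P has_vector_derivative flow_matrix B *v P t) (at t within {0..})"
      using ode M_deriv unfolding P_def[abs_def] M_def[symmetric]
      by (auto intro!: normalized_has_vector_derivative M_ne_0)
    show "\<forall>t\<ge>0. (\<Sum>i\<in>UNIV. P t $ i) = 1"
      using M_ne_0 by (simp add: P_def M_def sum_divide_distrib[symmetric])
  qed
  then have "((\<lambda>t. M t *\<^sub>R P t) \<longlongrightarrow> mbar *\<^sub>R (1 / (\<Sum>i\<in>UNIV. \<zeta> $ i)) *\<^sub>R \<zeta>) at_top"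
    by (intro tendsto_scaleR tendsto_equilibrium)
  moreover have "\<forall>\<^sub>F t in at_top. M t *\<^sub>R P t = X t"
    using eventually_ge_at_top[of "0::real"]
    by (rule eventually_mono) (simp add: P_def M_ne_0)
  ultimately show ?thesis by (simp add: Lim_transform_eventually)
qed

theorem mainTheorem3:
  fixes B :: "real^'n^'n" and \<zeta> x :: "real^'n" and X :: "real \<Rightarrow> real^'n"
    and \<phi> :: "real \<Rightarrow> real" and \<Gamma> K \<delta> \<sigma> mbar :: real
  assumes n2: "CARD('n) \<ge> 2"
    and N1: "hypN1 B"
    and zeta_pos: "\<forall>i. \<zeta> $ i > 0"
    and zeta_ker: "{v. (diagD B + transpose B) *v v = 0} = span {\<zeta>}"
    and params: "\<Gamma> > 0" "K > 0" "\<delta> > 0"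
    and spec: "(\<sigma> > 1 \<and> \<phi> = (\<lambda>m. \<Gamma> * (1 - (1 / K) * m powr (\<sigma> - 1)))
                   \<and> mbar = K powr (1 / (\<sigma> - 1)))
             \<or> (0 < \<sigma> \<and> \<sigma> < 1 \<and> \<phi> = (\<lambda>m. m powr (\<sigma> - 1) - \<delta>)
                   \<and> mbar = \<delta> powr (1 / (\<sigma> - 1)))
             \<or> (\<phi> = (\<lambda>m. \<Gamma> * (1 - (1 / K) * ln m)) \<and> mbar = exp K)"
    and x_nonneg: "\<forall>i. x $ i \<ge> 0" and x_ne: "x \<noteq> 0"
    and init: "X 0 = x"
    and ode: "\<forall>t\<ge>0. (X has_vector_derivative
                 (\<phi> (\<Sum>i\<in>UNIV. X t $ i) *\<^sub>R X t + (diagD B + transpose B) *v X t))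
                 (at t within {0..})"
  shows "(X \<longlongrightarrow> (mbar / (\<Sum>i\<in>UNIV. \<zeta> $ i)) *\<^sub>R \<zeta>) at_top
         \<and> (\<Sum>i\<in>UNIV. ((mbar / (\<Sum>j\<in>UNIV. \<zeta> $ j)) *\<^sub>R \<zeta>) $ i) = mbar
         \<and> (\<forall>i. ((mbar / (\<Sum>j\<in>UNIV. \<zeta> $ j)) *\<^sub>R \<zeta>) $ i \<ge> 0)"
proof -
  have ker: "flow_matrix B *v \<zeta> = 0"
    using zeta_ker span_base[of \<zeta> "{\<zeta>}"] by blast
  have rate: "logistic_rate \<phi> mbar"
    using spec params logistic_rate_richards logistic_rate_bertalanffy logistic_rate_gompertz
    by (elim disjE conjE) simp_all
  have "0 < (\<Sum>i\<in>UNIV. \<zeta> $ i)" using zeta_pos by (intro sum_pos) auto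
  moreover have "0 < mbar" using rate by (simp add: logistic_rate_def)
  ultimately show ?thesis
    using network_growth_tendsto[OF N1 zeta_pos ker rate x_nonneg x_ne init ode] zeta_pos
    by (auto simp: sum_distrib_left[symmetric] sum_divide_distrib[symmetric] less_imp_le)
qed

end
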